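(* Suppose $N$ carries a graded complementation and $X$ is a Macaulay basis of $M$. Then for every $m\in N$ there is exactly one $m'\in N$ such that $m\Rightarrow_X^* m'$ and $m'$ is reduced with respect to $\Rightarrow_X$. Moreover this $m'$ satisfies $m'_b\in N_b\ominus W_b(X)$ for every $b\in B$.
   Context: Standing setup. $\mathbf{k}$ is a field. $(A,+,0)$ is a finitely generated, cancellative commutative monoid with a total order $\le$ which is a well-order, such that $0<a$ for every $a\neq0$ and $a\le a'$ implies $a+c\le a'+c$. $R=\bigoplus_{a\in A}R_a$ is a commutative Noetherian $\mathbf{k}$-algebra graded by $A$. $B$ is a well-ordered totally ordered set with an action $(a,b)\mapsto a\cdot b$ of $A$ such that $0\cdot b=b$, $(a+a')\cdot b=a\cdot(a'\cdot b)$, monotone and cancellative in each argument. $N=\bigoplus_{b\in B}N_b$ is a Noetherian $R$-module graded by $B$ ($R_aN_b\subseteq N_{a\cdot b}$), $M\subseteq N$ an $R$-submodule. For $m=\sum_b m_b\ne0$: $\deg m=\max\{b:m_b\ne0\}$, $\operatorname{lf}(m)=m_{\deg m}$; homogeneous means lying in one graded piece (also for $R$). A finite set $X=\{m_1,\dots,m_n\}$ of nonzero elements of $M$ is a Macaulay basis of $M$ if the $R$-submodule generated by $\{\operatorname{lf}(p):0\ne p\in M\}$ equals that generated by $\operatorname{lf}(m_1),\dots,\operatorname{lf}(m_n)$. $W_b(X)=\operatorname{span}_{\mathbf{k}}\{r\operatorname{lf}(x): x\in X,\ r\in R\text{ homogeneous},\ r\operatorname{lf}(x)\in N_b\}\subseteq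 N_b$. A graded complementation on $N$ assigns to each $b$ and each subspace $W\le N_b$ a subspace $W^c\le N_b$ with $W\oplus W^c=N_b$; $U\ominus W:=U\cap W^c$. Relation: $m\Rightarrow_X m'$ iff $\{b: m_b\notin W_b(X)^c\}$ is nonempty with maximum $b$, and $m'=m-\sum_j r_jx_j$ with $x_j\in X$, $r_j\in R$ homogeneous, $r_j\operatorname{lf}(x_j)\in N_b$, and $m_b-\sum_j r_j\operatorname{lf}(x_j)\in W_b(X)^c$. $\Rightarrow_X^*$ is the reflexive–transitive closure; $m$ is reduced w.r.t. $\Rightarrow_X$ if no $m'$ satisfies $m\Rightarrow_X m'$. *)

theory Defs
  imports Main "HOL.Modules"
begin

inductive_set monoid_gen :: "'a::comm_monoid_add set \<Rightarrow> 'a set" for G where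
  gen_zero: "0 \<in> monoid_gen G"
| gen_add: "g \<in> G \<Longrightarrow> x \<in> monoid_gen G \<Longrightarrow> g + x \<in> monoid_gen G"

definition graded_decomp :: "('i \<Rightarrow> 'v::comm_monoid_add set) \<Rightarrow> bool" where
  "graded_decomp G \<longleftrightarrow>
     (\<forall>v. \<exists>!f. finite {i. f i \<noteq> 0} \<and> (\<forall>i. f i \<in> G i) \<and> v = sum f {i. f i \<noteq> 0})"

definition gcomp :: "('i \<Rightarrow> 'v::comm_monoid_add set) \<Rightarrow> 'v \<Rightarrow> 'i \<Rightarrow> 'v" where
  "gcomp G v = (THE f. finite {i. f i \<noteq> 0} \<and> (\<forall>i. f i \<in> G i) \<and> v = sum f {i. f i \<noteq> 0})"

text \<open>deg m = max {b. m_b \<noteq> 0}, lf m = m_(deg m) (meaningful for m \<noteq> 0).\<close>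
definition gdeg :: "('i::linorder \<Rightarrow> 'v::comm_monoid_add set) \<Rightarrow> 'v \<Rightarrow> 'i" where
  "gdeg G v = Max {i. gcomp G v i \<noteq> 0}"

definition glf :: "('i::linorder \<Rightarrow> 'v::comm_monoid_add set) \<Rightarrow> 'v \<Rightarrow> 'v" where
  "glf G v = gcomp G v (gdeg G v)"

definition kscale :: "('k \<Rightarrow> 'r) \<Rightarrow> ('r \<Rightarrow> 'n \<Rightarrow> 'n) \<Rightarrow> 'k \<Rightarrow> 'n \<Rightarrow> 'n" where
  "kscale alg rmul c n = rmul (alg c) n"

definition homogeneous :: "('a \<Rightarrow> 'r set) \<Rightarrow> 'r \<Rightarrow> bool" where
  "homogeneous gradR r \<longleftrightarrow> (\<exists>a. r \<in> gradR a)"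

text \<open>Standing setup: k field, A finitely generated cancellative commutative
  well-ordered monoid, R = (+)_a R_a a commutative Noetherian A-graded k-algebra
  (k-algebra structure via the ring homomorphism alg), B a well-ordered set with
  an A-action, N = (+)_b N_b a Noetherian B-graded R-module, M \<subseteq> N a submodule.\<close>
definition standing_setup ::
  "('k::field \<Rightarrow> 'r::comm_ring_1) \<Rightarrow> ('a::{cancel_comm_monoid_add, wellorder} \<Rightarrow> 'r set)
     \<Rightarrow> ('a \<Rightarrow> 'b::wellorder \<Rightarrow> 'b) \<Rightarrow> ('r \<Rightarrow> 'n::ab_group_add \<Rightarrow> 'n) \<Rightarrow> ('b \<Rightarrow> 'n set)
     \<Rightarrow> 'n set \<Rightarrow> bool" where
  "standing_setup alg gradR act rmul gradN M \<longleftrightarrow>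
     \<comment> \<open>A: finitely generated, 0 < a for a \<noteq> 0, order compatible with +\<close>
     (\<exists>G :: 'a set. finite G \<and> monoid_gen G = UNIV) \<and>
     (\<forall>a :: 'a. a \<noteq> 0 \<longrightarrow> 0 < a) \<and>
     (\<forall>a a' c :: 'a. a \<le> a' \<longrightarrow> a + c \<le> a' + c) \<and>
     \<comment> \<open>R: commutative k-algebra (structure map alg), A-graded, Noetherian\<close>
     alg 1 = 1 \<and> (\<forall>c d. alg (c + d) = alg c + alg d) \<and> (\<forall>c d. alg (c * d) = alg c * alg d) \<and>
     (\<forall>a. module.subspace (\<lambda>c r. alg c * r) (gradR a)) \<and>
     (\<forall>r s a a'. r \<in> gradR a \<and> s \<in> gradR a' \<longrightarrow> r * s \<in> gradR (a + a')) \<and>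
     graded_decomp gradR \<and>
     (\<forall>I. module.subspace ((*) :: 'r \<Rightarrow> 'r \<Rightarrow> 'r) I \<longrightarrow>
          (\<exists>F. finite F \<and> module.span ((*) :: 'r \<Rightarrow> 'r \<Rightarrow> 'r) F = I)) \<and>
     \<comment> \<open>B: well-ordered set with a monotone cancellative A-action\<close>
     (\<forall>b. act 0 b = b) \<and>
     (\<forall>a a' b. act (a + a') b = act a (act a' b)) \<and>
     (\<forall>a a' b. a \<le> a' \<longrightarrow> act a b \<le> act a' b) \<and>
     (\<forall>a b b'. b \<le> b' \<longrightarrow> act a b \<le> act a b') \<and>
     (\<forall>a a' b. act a b = act a' b \<longrightarrow> a = a') \<and>
     (\<forall>a b b'. act a b = act a b' \<longrightarrow> b = b') \<and>
     \<comment> \<open>N: B-graded Noetherian R-module\<close>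
     module rmul \<and>
     (\<forall>b. module.subspace (kscale alg rmul) (gradN b)) \<and>
     (\<forall>r n a b. r \<in> gradR a \<and> n \<in> gradN b \<longrightarrow> rmul r n \<in> gradN (act a b)) \<and>
     graded_decomp gradN \<and>
     (\<forall>S. module.subspace rmul S \<longrightarrow> (\<exists>F. finite F \<and> module.span rmul F = S)) \<and>
     \<comment> \<open>M: R-submodule of N\<close>
     module.subspace rmul M"

definition macaulay_basis ::
  "('r::comm_ring_1 \<Rightarrow> 'n::ab_group_add \<Rightarrow> 'n) \<Rightarrow> ('b::linorder \<Rightarrow> 'n set) \<Rightarrow> 'n set \<Rightarrow> 'n set \<Rightarrow> bool" where
  "macaulay_basis rmul gradN M X \<longleftrightarrow>
     finite X \<and> X \<subseteq> M \<and> 0 \<notin> X \<and>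
     module.span rmul {glf gradN p | p. p \<in> M \<and> p \<noteq> 0} = module.span rmul (glf gradN ` X)"

definition graded_complementation ::
  "('k::field \<Rightarrow> 'r::comm_ring_1) \<Rightarrow> ('r \<Rightarrow> 'n::ab_group_add \<Rightarrow> 'n) \<Rightarrow> ('b \<Rightarrow> 'n set)
     \<Rightarrow> ('b \<Rightarrow> 'n set \<Rightarrow> 'n set) \<Rightarrow> bool" where
  "graded_complementation alg rmul gradN compl \<longleftrightarrow>
     (\<forall>b W. module.subspace (kscale alg rmul) W \<and> W \<subseteq> gradN b \<longrightarrow>
        module.subspace (kscale alg rmul) (compl b W) \<and> compl b W \<subseteq> gradN b \<and>
        W \<inter> compl b W = {0} \<and> {w + w' | w w'. w \<in> W \<and> w' \<in> compl b W} = gradN b)"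

definition compl_diff :: "('b \<Rightarrow> 'n set \<Rightarrow> 'n set) \<Rightarrow> 'b \<Rightarrow> 'n set \<Rightarrow> 'n set \<Rightarrow> 'n set" where
  "compl_diff compl b U W = U \<inter> compl b W"

definition Wspace ::
  "('k::field \<Rightarrow> 'r::comm_ring_1) \<Rightarrow> ('a \<Rightarrow> 'r set) \<Rightarrow> ('r \<Rightarrow> 'n::ab_group_add \<Rightarrow> 'n)
     \<Rightarrow> ('b::linorder \<Rightarrow> 'n set) \<Rightarrow> 'n set \<Rightarrow> 'b \<Rightarrow> 'n set" where
  "Wspace alg gradR rmul gradN X b =
     module.span (kscale alg rmul)
       {rmul r (glf gradN x) | x r. x \<in> X \<and> homogeneous gradR r \<and> rmul r (glf gradN x) \<in> gradN b}"

definition red_step ::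
  "('k::field \<Rightarrow> 'r::comm_ring_1) \<Rightarrow> ('a \<Rightarrow> 'r set) \<Rightarrow> ('r \<Rightarrow> 'n::ab_group_add \<Rightarrow> 'n)
     \<Rightarrow> ('b::linorder \<Rightarrow> 'n set) \<Rightarrow> ('b \<Rightarrow> 'n set \<Rightarrow> 'n set) \<Rightarrow> 'n set \<Rightarrow> 'n \<Rightarrow> 'n \<Rightarrow> bool" where
  "red_step alg gradR rmul gradN compl X m m' \<longleftrightarrow>
     (\<exists>b. gcomp gradN m b \<notin> compl b (Wspace alg gradR rmul gradN X b) \<and>
          (\<forall>b'. gcomp gradN m b' \<notin> compl b' (Wspace alg gradR rmul gradN X b') \<longrightarrow> b' \<le> b) \<and>
          (\<exists>rs :: ('r \<times> 'n) list.
             (\<forall>(r, x) \<in> set rs. x \<in> X \<and> homogeneous gradR r \<and> rmul r (glf gradN x) \<in> gradN b) \<and>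
             m' = m - (\<Sum>(r, x) \<leftarrow> rs. rmul r x) \<and>
             gcomp gradN m b - (\<Sum>(r, x) \<leftarrow> rs. rmul r (glf gradN x))
               \<in> compl b (Wspace alg gradR rmul gradN X b)))"

definition reduced ::
  "('k::field \<Rightarrow> 'r::comm_ring_1) \<Rightarrow> ('a \<Rightarrow> 'r set) \<Rightarrow> ('r \<Rightarrow> 'n::ab_group_add \<Rightarrow> 'n)
     \<Rightarrow> ('b::linorder \<Rightarrow> 'n set) \<Rightarrow> ('b \<Rightarrow> 'n set \<Rightarrow> 'n set) \<Rightarrow> 'n set \<Rightarrow> 'n \<Rightarrow> bool" where
  "reduced alg gradR rmul gradN compl X m \<longleftrightarrow> \<not> (\<exists>m'. red_step alg gradR rmul gradN compl X m m')"

end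

theory Submission
  imports Defs "HOL-Library.Option_ord"
begin

text \<open>Every reduction step subtracts an element of \<open>M\<close>. Existence: let \<open>b\<close> be the largest
  degree with \<open>m\<^sub>b \<notin> W\<^sub>b(X)\<^sup>c\<close>. Writing the \<open>W\<^sub>b(X)\<close>-part of \<open>m\<^sub>b\<close> as a sum of products
  \<open>r lf(x)\<close> that are nonzero and of degree \<open>b\<close>, the corresponding terms \<open>r x\<close> have no
  components above \<open>b\<close>, so subtracting them makes every degree \<open>\<ge> b\<close> reduced; the largest
  unreduced degree decreases and the well-order on \<open>B\<close> gives termination. Uniqueness: two
  reducts differ by some \<open>p \<in> M\<close> with all components in the complements. As \<open>X\<close> is a Macaulay
  basis, \<open>lf(p)\<close> is an \<open>R\<close>-combination of the \<open>lf(x)\<close>; its homogeneous component of degree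
  \<open>deg p\<close> shows \<open>lf(p) \<in> W\<^bsub>deg p\<^esub>(X)\<close>, which meets the complement only in \<open>0\<close>, so \<open>p = 0\<close>.\<close>

section \<open>Homogeneous components\<close>

definition additive_subgroups :: "('i \<Rightarrow> 'v::ab_group_add set) \<Rightarrow> bool" where
  "additive_subgroups G \<longleftrightarrow> (\<forall>i. 0 \<in> G i \<and> (\<forall>x\<in>G i. \<forall>y\<in>G i. x + y \<in> G i) \<and> (\<forall>x\<in>G i. - x \<in> G i))"

lemma gcomp_decomposition:
  assumes "graded_decomp G"
  shows "finite {i. gcomp G v i \<noteq> 0} \<and> (\<forall>i. gcomp G v i \<in> G i) \<and> v = sum (gcomp G v) {i. gcomp G v i \<noteq> 0}"
proof -
  from assms have "\<exists>!f. finite {i. f i \<noteq> 0} \<and> (\<forall>i. f i \<in> G i) \<and> v = sum f {i. f i \<noteq> 0}"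
    unfolding graded_decomp_def by blast
  then show ?thesis unfolding gcomp_def by (rule theI')
qed

lemma gcomp_in: "graded_decomp G \<Longrightarrow> gcomp G v i \<in> G i"
  using gcomp_decomposition by blast

lemma finite_gcomp_support: "graded_decomp G \<Longrightarrow> finite {i. gcomp G v i \<noteq> 0}"
  using gcomp_decomposition by blast

lemma sum_gcomp_eq:
  assumes "graded_decomp G" "finite S" "{i. gcomp G v i \<noteq> 0} \<subseteq> S"
  shows "sum (gcomp G v) S = v"
proof -
  have "sum (gcomp G v) S = sum (gcomp G v) {i. gcomp G v i \<noteq> 0}"
    by (rule sum.mono_neutral_right[OF assms(2,3)]) auto
  also have "\<dots> = v" using gcomp_decomposition[OF assms(1)] by metis
  finally show ?thesis .
qed

lemma gcomp_unique:
  assumes "graded_decomp G" "finite S" "\<And>i. i \<notin> S \<Longrightarrow> f i = 0" "\<And>i. f i \<in> G i" "v = sum f S"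
  shows "gcomp G v = f"
proof -
  have sub: "{i. f i \<noteq> 0} \<subseteq> S" using assms(3) by blast
  have "sum f S = sum f {i. f i \<noteq> 0}" by (rule sum.mono_neutral_right[OF assms(2) sub]) auto
  then have "finite {i. f i \<noteq> 0} \<and> (\<forall>i. f i \<in> G i) \<and> v = sum f {i. f i \<noteq> 0}"
    using finite_subset[OF sub assms(2)] assms(4,5) by auto
  moreover from assms(1) have "\<exists>!f. finite {i. f i \<noteq> 0} \<and> (\<forall>i. f i \<in> G i) \<and> v = sum f {i. f i \<noteq> 0}"
    unfolding graded_decomp_def by blast
  ultimately show ?thesis unfolding gcomp_def by (rule the1_equality[rotated])
qed

lemma gcomp_add:
  assumes "graded_decomp G" "additive_subgroups G"
  shows "gcomp G (u + v) i = gcomp G u i + gcomp G v i"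
proof -
  let ?S = "{i. gcomp G u i \<noteq> 0} \<union> {i. gcomp G v i \<noteq> 0}"
  have fin: "finite ?S" using finite_gcomp_support[OF assms(1)] by auto
  have "u + v = (\<Sum>i\<in>?S. gcomp G u i + gcomp G v i)"
    using sum_gcomp_eq[OF assms(1) fin, of u] sum_gcomp_eq[OF assms(1) fin, of v]
    by (simp add: sum.distrib)
  with fin have "gcomp G (u + v) = (\<lambda>i. gcomp G u i + gcomp G v i)"
    using gcomp_in[OF assms(1)] assms(2) unfolding additive_subgroups_def
    by (intro gcomp_unique[OF assms(1)]) auto
  then show ?thesis by simp
qed

lemma gcomp_homogeneous:
  assumes "graded_decomp G" "additive_subgroups G" "v \<in> G c"
  shows "gcomp G v i = (if i = c then v else 0)"
proof -
  have "gcomp G v = (\<lambda>i. if i = c then v else 0)"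
    by (rule gcomp_unique[OF assms(1), where S = "{c}"])
      (use assms(2,3) in \<open>auto simp: additive_subgroups_def\<close>)
  then show ?thesis by simp
qed

lemma gcomp_zero:
  assumes "graded_decomp G" "additive_subgroups G"
  shows "gcomp G 0 i = 0"
  using gcomp_homogeneous[OF assms, of 0 i] assms(2) unfolding additive_subgroups_def by auto

lemma gcomp_uminus:
  assumes "graded_decomp G" "additive_subgroups G"
  shows "gcomp G (- u) i = - gcomp G u i"
  using gcomp_add[OF assms, of u "- u" i] gcomp_zero[OF assms, of i] by (metis neg_eq_iff_add_eq_0)

lemma gcomp_diff:
  assumes "graded_decomp G" "additive_subgroups G"
  shows "gcomp G (u - v) i = gcomp G u i - gcomp G v i"
  using gcomp_add[OF assms, of u "- v"] gcomp_uminus[OF assms, of v] by simp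

lemma gcomp_sum:
  assumes "graded_decomp G" "additive_subgroups G"
  shows "gcomp G (sum h I) i = (\<Sum>k\<in>I. gcomp G (h k) i)"
  by (induction I rule: infinite_finite_induct) (simp_all add: gcomp_zero[OF assms] gcomp_add[OF assms])

lemma graded_piece_unique:
  assumes "graded_decomp G" "additive_subgroups G" "v \<in> G c" "v \<in> G d" "v \<noteq> 0"
  shows "c = d"
  using gcomp_homogeneous[OF assms(1-3), of c] gcomp_homogeneous[OF assms(1,2,4), of c] assms(5)
  by (auto split: if_splits)

lemma gdeg_greatest: "graded_decomp G \<Longrightarrow> gcomp G v i \<noteq> 0 \<Longrightarrow> i \<le> gdeg G v"
  unfolding gdeg_def using finite_gcomp_support by (blast intro: Max_ge)

lemma glf_in: "graded_decomp G \<Longrightarrow> glf G v \<in> G (gdeg G v)"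
  unfolding glf_def by (rule gcomp_in)

lemma glf_nonzero:
  assumes "graded_decomp G" "v \<noteq> 0"
  shows "glf G v \<noteq> 0"
proof -
  have "{i. gcomp G v i \<noteq> 0} \<noteq> {}"
    using gcomp_decomposition[OF assms(1), of v] assms(2) by force
  then have "gdeg G v \<in> {i. gcomp G v i \<noteq> 0}"
    unfolding gdeg_def using finite_gcomp_support[OF assms(1)] by (rule Max_in[rotated])
  then show ?thesis unfolding glf_def by simp
qed

section \<open>Reduction modulo a Macaulay basis\<close>

locale macaulay_reduction =
  fixes alg :: "'k::field \<Rightarrow> 'r::comm_ring_1"
    and gradR :: "'a::{cancel_comm_monoid_add, wellorder} \<Rightarrow> 'r set"
    and act :: "'a \<Rightarrow> 'b::wellorder \<Rightarrow> 'b"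
    and rmul :: "'r \<Rightarrow> 'n::ab_group_add \<Rightarrow> 'n"
    and gradN :: "'b \<Rightarrow> 'n set"
    and M X :: "'n set"
    and compl :: "'b \<Rightarrow> 'n set \<Rightarrow> 'n set"
  assumes standing: "standing_setup alg gradR act rmul gradN M"
    and complementation: "graded_complementation alg rmul gradN compl"
    and basis: "macaulay_basis rmul gradN M X"
begin

abbreviation "W b \<equiv> Wspace alg gradR rmul gradN X b"
abbreviation "C b \<equiv> compl b (W b)"
abbreviation "step \<equiv> red_step alg gradR rmul gradN compl X"
abbreviation "is_reduced \<equiv> reduced alg gradR rmul gradN compl X"

lemma rmul_module: "module rmul"
  and gradR_decomp: "graded_decomp gradR"
  and gradN_decomp: "graded_decomp gradN"
  and gradR_subspace: "module.subspace (\<lambda>c r. alg c * r) (gradR a)"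
  and gradN_subspace: "module.subspace (kscale alg rmul) (gradN b)"
  and rmul_in_gradN: "r \<in> gradR a \<Longrightarrow> n \<in> gradN b \<Longrightarrow> rmul r n \<in> gradN (act a b)"
  and act_mono: "b \<le> b' \<Longrightarrow> act a b \<le> act a b'"
  and act_cancel: "act a b = act a b' \<Longrightarrow> b = b'"
  and M_subspace: "module.subspace rmul M"
  using standing unfolding standing_setup_def by auto

lemma X_subset_M: "X \<subseteq> M"
  and span_glf_M: "module.span rmul {glf gradN p | p. p \<in> M \<and> p \<noteq> 0} = module.span rmul (glf gradN ` X)"
  using basis unfolding macaulay_basis_def by blast+

lemma alg_hom: "alg 1 = 1" "alg (c + d) = alg c + alg d" "alg (c * d) = alg c * alg d"
  using standing unfolding standing_setup_def by auto

lemma kscale_module: "module (kscale alg rmul)"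
  unfolding kscale_def
  by unfold_locales (simp_all add: alg_hom module.scale_right_distrib[OF rmul_module]
      module.scale_left_distrib[OF rmul_module] module.scale_scale[OF rmul_module]
      module.scale_one[OF rmul_module])

lemma alg_mult_in_gradR: "r \<in> gradR a \<Longrightarrow> alg c * r \<in> gradR a"
proof -
  have "module (\<lambda>c (r::'r). alg c * r)"
    by unfold_locales (simp_all add: alg_hom algebra_simps)
  then show "r \<in> gradR a \<Longrightarrow> alg c * r \<in> gradR a"
    using module.subspace_scale gradR_subspace by blast
qed

lemma gradN_subgroups: "additive_subgroups gradN"
  unfolding additive_subgroups_def
  using module.subspace_0[OF kscale_module gradN_subspace] module.subspace_add[OF kscale_module gradN_subspace]
    module.subspace_neg[OF kscale_module gradN_subspace] by blast

lemmas gcompN_add = gcomp_add[OF gradN_decomp gradN_subgroups]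
  and gcompN_zero = gcomp_zero[OF gradN_decomp gradN_subgroups]
  and gcompN_diff = gcomp_diff[OF gradN_decomp gradN_subgroups]
  and gcompN_sum = gcomp_sum[OF gradN_decomp gradN_subgroups]
  and gcompN_homogeneous = gcomp_homogeneous[OF gradN_decomp gradN_subgroups]

lemma Wspace_subspace: "module.subspace (kscale alg rmul) (W b)"
  and Wspace_subset: "W b \<subseteq> gradN b"
  unfolding Wspace_def
  by (rule module.subspace_span[OF kscale_module])
    (rule module.span_minimal[OF kscale_module _ gradN_subspace], blast)

lemma complement_subspace: "module.subspace (kscale alg rmul) (C b)"
  and Wspace_Int_complement: "W b \<inter> C b = {0}"
  and Wspace_plus_complement: "{w + w' | w w'. w \<in> W b \<and> w' \<in> C b} = gradN b"
  using complementation Wspace_subspace Wspace_subset unfolding graded_complementation_def by blast+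

lemma zero_in_complement: "0 \<in> C b"
  using module.subspace_0[OF kscale_module complement_subspace] .

lemma diff_in_complement: "x \<in> C b \<Longrightarrow> y \<in> C b \<Longrightarrow> x - y \<in> C b"
  using module.subspace_diff[OF kscale_module complement_subspace] .

definition unreduced_degrees :: "'n \<Rightarrow> 'b set" where
  "unreduced_degrees m = {b. gcomp gradN m b \<notin> C b}"

lemma finite_unreduced_degrees: "finite (unreduced_degrees m)"
  by (rule finite_subset[OF _ finite_gcomp_support[OF gradN_decomp, of m]])
    (use zero_in_complement in \<open>force simp: unreduced_degrees_def\<close>)

lemma gcomp_rmul_above_leading:
  assumes r: "r \<in> gradR a" and leading: "rmul r (glf gradN x) \<in> gradN b" "rmul r (glf gradN x) \<noteq> 0"
    and "b \<le> b'"
  shows "gcomp gradN (rmul r x) b' = (if b' = b then rmul r (glf gradN x) else 0)"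
proof -
  let ?S = "{d. gcomp gradN x d \<noteq> 0}" and ?D = "gdeg gradN x"
  have "act a ?D = b"
    using graded_piece_unique[OF gradN_decomp gradN_subgroups rmul_in_gradN[OF r glf_in[OF gradN_decomp]]
        leading] .
  then have degree_hit: "act a d = b' \<longleftrightarrow> d = ?D \<and> b' = b" if "d \<in> ?S" for d
    using act_mono[OF gdeg_greatest[OF gradN_decomp, of x d]] act_cancel[of a d ?D] that \<open>b \<le> b'\<close>
    by (metis (mono_tags) mem_Collect_eq order.antisym)
  have "?D \<in> ?S"
    using leading(2) unfolding glf_def by (auto simp: module.scale_zero_right[OF rmul_module])
  have "rmul r x = (\<Sum>d\<in>?S. rmul r (gcomp gradN x d))"
    using sum_gcomp_eq[OF gradN_decomp finite_gcomp_support[OF gradN_decomp] subset_refl, of x]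
      module.scale_sum_right[OF rmul_module] by metis
  then have "gcomp gradN (rmul r x) b' = (\<Sum>d\<in>?S. if b' = act a d then rmul r (gcomp gradN x d) else 0)"
    by (simp add: gcompN_sum gcompN_homogeneous[OF rmul_in_gradN[OF r gcomp_in[OF gradN_decomp]]])
  also have "\<dots> = (\<Sum>d\<in>?S. if d = ?D \<and> b' = b then rmul r (gcomp gradN x d) else 0)"
    using degree_hit by (intro sum.cong) auto
  also have "\<dots> = (if b' = b then rmul r (glf gradN x) else 0)"
    using \<open>?D \<in> ?S\<close> finite_gcomp_support[OF gradN_decomp, of x] by (simp add: glf_def)
  finally show ?thesis .
qed

text \<open>Nonzero products are essential: \<open>r lf(x) \<noteq> 0\<close> forces \<open>deg r \<cdot> deg x = b\<close>, which is
  what keeps every component of \<open>r x\<close> in degrees \<open>\<le> b\<close>.\<close>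

definition leading_terms :: "'b \<Rightarrow> ('r \<times> 'n) list \<Rightarrow> bool" where
  "leading_terms b rs \<longleftrightarrow> (\<forall>(r, x)\<in>set rs. x \<in> X \<and> homogeneous gradR r \<and>
     rmul r (glf gradN x) \<in> gradN b \<and> rmul r (glf gradN x) \<noteq> 0)"

lemma gcomp_sum_list_rmul_above_leading:
  assumes "leading_terms b rs" and "b \<le> b'"
  shows "gcomp gradN (\<Sum>(r, x)\<leftarrow>rs. rmul r x) b' = (if b' = b then \<Sum>(r, x)\<leftarrow>rs. rmul r (glf gradN x) else 0)"
  using assms(1)
proof (induction rs)
  case Nil
  show ?case by (simp add: gcompN_zero)
next
  case (Cons p rs)
  obtain r x a where "p = (r, x)" "r \<in> gradR a"
    using Cons.prems unfolding leading_terms_def homogeneous_def by fastforce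
  then show ?case
    using Cons gcomp_rmul_above_leading[OF _ _ _ assms(2)] by (auto simp: gcompN_add leading_terms_def)
qed

lemma Wspace_leading_terms:
  assumes "w \<in> W b"
  obtains rs where "leading_terms b rs" and "(\<Sum>(r, x)\<leftarrow>rs. rmul r (glf gradN x)) = w"
proof -
  have "\<exists>rs. leading_terms b rs \<and> (\<Sum>(r, x)\<leftarrow>rs. rmul r (glf gradN x)) = w"
    using assms unfolding Wspace_def
  proof (induction rule: module.span_induct_alt[OF kscale_module, consumes 1, case_names base step])
    case base
    show ?case by (intro exI[of _ "[]"]) (simp add: leading_terms_def)
  next
    case (step c g w)
    then obtain x r rs where g: "g = rmul r (glf gradN x)" "x \<in> X" "homogeneous gradR r" "g \<in> gradN b"
      and rs: "leading_terms b rs" "(\<Sum>(r, x)\<leftarrow>rs. rmul r (glf gradN x)) = w"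
      by blast
    have cg: "kscale alg rmul c g = rmul (alg c * r) (glf gradN x)"
      unfolding kscale_def g(1) by (rule module.scale_scale[OF rmul_module])
    have hom: "homogeneous gradR (alg c * r)"
      using g(3) alg_mult_in_gradR unfolding homogeneous_def by blast
    have deg: "kscale alg rmul c g \<in> gradN b"
      using module.subspace_scale[OF kscale_module gradN_subspace g(4)] .
    show ?case
    proof (cases "kscale alg rmul c g = 0")
      case True
      then show ?thesis using rs by auto
    next
      case False
      then show ?thesis
        using rs g(2) cg hom deg
        by (intro exI[of _ "(alg c * r, x) # rs"]) (auto simp: leading_terms_def)
    qed
  qed
  then show ?thesis using that by blast
qed

lemma red_step_lowering_degrees:
  assumes "unreduced_degrees m \<noteq> {}"
  obtains m' where "step m m'" and "\<forall>b\<in>unreduced_degrees m'. b < Max (unreduced_degrees m)"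
proof -
  define b where "b = Max (unreduced_degrees m)"
  have b_unreduced: "b \<in> unreduced_degrees m" and b_max: "\<forall>b'\<in>unreduced_degrees m. b' \<le> b"
    using finite_unreduced_degrees assms unfolding b_def by auto
  obtain w w' where split: "gcomp gradN m b = w + w'" "w \<in> W b" "w' \<in> C b"
    using gcomp_in[OF gradN_decomp] Wspace_plus_complement by blast
  obtain rs where rs: "leading_terms b rs" and rs_sum: "(\<Sum>(r, x)\<leftarrow>rs. rmul r (glf gradN x)) = w"
    using Wspace_leading_terms[OF split(2)] .
  define m' where "m' = m - (\<Sum>(r, x)\<leftarrow>rs. rmul r x)"
  have "step m m'"
    unfolding red_step_def
    using b_unreduced b_max rs rs_sum split m'_def
    by (intro exI[of _ b] conjI exI[of _ rs]) (auto simp: unreduced_degrees_def leading_terms_def)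
  moreover have "b' \<notin> unreduced_degrees m'" if "b \<le> b'" for b'
  proof -
    have "gcomp gradN m' b' = gcomp gradN m b' - (if b' = b then w else 0)"
      using gcomp_sum_list_rmul_above_leading[OF _ that] rs rs_sum
      by (fastforce simp: m'_def gcompN_diff)
    then show ?thesis
      using split b_max that by (cases "b' = b") (auto simp: unreduced_degrees_def)
  qed
  ultimately show ?thesis using that unfolding b_def by (meson not_le)
qed

lemma reduced_iff_no_unreduced_degrees: "is_reduced m \<longleftrightarrow> unreduced_degrees m = {}"
proof
  show "is_reduced m \<Longrightarrow> unreduced_degrees m = {}"
    using red_step_lowering_degrees unfolding reduced_def by metis
  show "unreduced_degrees m = {} \<Longrightarrow> is_reduced m"
    unfolding reduced_def red_step_def unreduced_degrees_def by blast
qed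

text \<open>\<open>None\<close> is the least element of \<open>'b option\<close>, so this measure is well-founded and
  minimal exactly on reduced elements.\<close>

definition top_unreduced_degree :: "'n \<Rightarrow> 'b option" where
  "top_unreduced_degree m =
     (if unreduced_degrees m = {} then None else Some (Max (unreduced_degrees m)))"

lemma reduct_exists: "\<exists>m'. step\<^sup>*\<^sup>* m m' \<and> is_reduced m'"
proof (induction "top_unreduced_degree m" arbitrary: m rule: less_induct)
  case less
  show ?case
  proof (cases "unreduced_degrees m = {}")
    case True
    then show ?thesis using reduced_iff_no_unreduced_degrees by blast
  next
    case False
    then obtain m' where "step m m'" and lower: "\<forall>b\<in>unreduced_degrees m'. b < Max (unreduced_degrees m)"
      by (rule red_step_lowering_degrees)
    have "top_unreduced_degree m' < top_unreduced_degree m"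
      using lower False Max_in[OF finite_unreduced_degrees, of m']
      by (auto simp: top_unreduced_degree_def)
    then obtain m'' where "step\<^sup>*\<^sup>* m' m''" "is_reduced m''"
      using less by blast
    then show ?thesis using \<open>step m m'\<close> by (meson converse_rtranclp_into_rtranclp)
  qed
qed

lemma red_step_diff_in_M: "step m m' \<Longrightarrow> m - m' \<in> M"
proof -
  assume "step m m'"
  then obtain rs where rs: "\<forall>(r, x)\<in>set rs. x \<in> X" and m': "m' = m - (\<Sum>(r, x)\<leftarrow>rs. rmul r x)"
    unfolding red_step_def by blast
  have "(\<Sum>(r, x)\<leftarrow>rs. rmul r x) \<in> M"
    using rs X_subset_M
    by (induction rs) (auto intro: module.subspace_0[OF rmul_module M_subspace]
        module.subspace_add[OF rmul_module M_subspace] module.subspace_scale[OF rmul_module M_subspace])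
  then show ?thesis using m' by simp
qed

lemma reduction_diff_in_M: "step\<^sup>*\<^sup>* m m' \<Longrightarrow> m - m' \<in> M"
proof (induction rule: rtranclp_induct)
  case base
  show ?case using module.subspace_0[OF rmul_module M_subspace] by simp
next
  case (step m' m'')
  have "m - m'' = (m - m') + (m' - m'')" by simp
  then show ?case
    using step red_step_diff_in_M module.subspace_add[OF rmul_module M_subspace] by metis
qed

lemma gcomp_rmul_glf_in_Wspace:
  assumes "x \<in> X"
  shows "gcomp gradN (rmul r (glf gradN x)) b \<in> W b"
proof -
  have homogeneous_part: "gcomp gradN (rmul (gcomp gradR r a) (glf gradN x)) b \<in> W b" for a
  proof -
    have hom: "rmul (gcomp gradR r a) (glf gradN x) \<in> gradN (act a (gdeg gradN x))"
      by (rule rmul_in_gradN[OF gcomp_in[OF gradR_decomp] glf_in[OF gradN_decomp]])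
    show ?thesis
    proof (cases "b = act a (gdeg gradN x)")
      case True
      then have "rmul (gcomp gradR r a) (glf gradN x) \<in> W b"
        unfolding Wspace_def using assms hom gcomp_in[OF gradR_decomp, of r a]
        by (intro module.span_base[OF kscale_module]) (auto simp: homogeneous_def)
      then show ?thesis using gcompN_homogeneous[OF hom] True by simp
    next
      case False
      then show ?thesis
        using gcompN_homogeneous[OF hom] module.subspace_0[OF kscale_module Wspace_subspace] by simp
    qed
  qed
  have "rmul r (glf gradN x) = (\<Sum>a\<in>{a. gcomp gradR r a \<noteq> 0}. rmul (gcomp gradR r a) (glf gradN x))"
    using sum_gcomp_eq[OF gradR_decomp finite_gcomp_support[OF gradR_decomp] subset_refl, of r]
      module.scale_sum_left[OF rmul_module] by metis
  then show ?thesis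
    using homogeneous_part by (simp add: gcompN_sum module.subspace_sum[OF kscale_module Wspace_subspace])
qed

lemma gcomp_span_glf_in_Wspace:
  assumes "v \<in> module.span rmul (glf gradN ` X)"
  shows "gcomp gradN v b \<in> W b"
  using assms
proof (induction rule: module.span_induct_alt[OF rmul_module, consumes 1, case_names base step])
  case base
  show ?case using gcompN_zero module.subspace_0[OF kscale_module Wspace_subspace] by simp
next
  case (step c y v)
  then obtain x where "x \<in> X" "y = glf gradN x" by blast
  then show ?case
    using step.IH gcomp_rmul_glf_in_Wspace[of x c b] module.subspace_add[OF kscale_module Wspace_subspace]
    by (simp add: gcompN_add)
qed

lemma glf_in_Wspace:
  assumes "p \<in> M" "p \<noteq> 0"
  shows "glf gradN p \<in> W (gdeg gradN p)"
proof -
  have "glf gradN p \<in> module.span rmul {glf gradN q | q. q \<in> M \<and> q \<noteq> 0}"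
    by (rule module.span_base[OF rmul_module]) (use assms in blast)
  then have "glf gradN p \<in> module.span rmul (glf gradN ` X)"
    unfolding span_glf_M .
  then have "gcomp gradN (glf gradN p) (gdeg gradN p) \<in> W (gdeg gradN p)"
    by (rule gcomp_span_glf_in_Wspace)
  then show ?thesis using gcompN_homogeneous[OF glf_in[OF gradN_decomp]] by simp
qed

lemma eq_0_if_components_in_complements:
  assumes "p \<in> M" "\<forall>b. gcomp gradN p b \<in> C b"
  shows "p = 0"
proof (rule ccontr)
  assume "p \<noteq> 0"
  then have "glf gradN p \<in> W (gdeg gradN p) \<inter> C (gdeg gradN p)"
    using glf_in_Wspace assms unfolding glf_def by blast
  then show False using Wspace_Int_complement glf_nonzero[OF gradN_decomp \<open>p \<noteq> 0\<close>] by blast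
qed

lemma reduct_unique:
  assumes "step\<^sup>*\<^sup>* m m1" "is_reduced m1" "step\<^sup>*\<^sup>* m m2" "is_reduced m2"
  shows "m1 = m2"
proof -
  have "m1 - m2 = (m - m2) - (m - m1)" by simp
  then have "m1 - m2 \<in> M"
    using reduction_diff_in_M assms(1,3) module.subspace_diff[OF rmul_module M_subspace] by metis
  moreover have "gcomp gradN (m1 - m2) b \<in> C b" for b
    using assms(2,4) diff_in_complement[of "gcomp gradN m1 b" b "gcomp gradN m2 b"]
    unfolding reduced_iff_no_unreduced_degrees unreduced_degrees_def gcompN_diff by blast
  ultimately have "m1 - m2 = 0" using eq_0_if_components_in_complements by blast
  then show ?thesis by simp
qed

lemma reduced_components:
  "is_reduced m \<Longrightarrow> gcomp gradN m b \<in> compl_diff compl b (gradN b) (W b)"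
  using gcomp_in[OF gradN_decomp]
  unfolding reduced_iff_no_unreduced_degrees unreduced_degrees_def compl_diff_def by blast

end

theorem mainTheorem4:
  fixes alg :: "'k::field \<Rightarrow> 'r::comm_ring_1"
    and gradR :: "'a::{cancel_comm_monoid_add, wellorder} \<Rightarrow> 'r set"
    and act :: "'a \<Rightarrow> 'b::wellorder \<Rightarrow> 'b"
    and rmul :: "'r \<Rightarrow> 'n::ab_group_add \<Rightarrow> 'n"
    and gradN :: "'b \<Rightarrow> 'n set"
    and M X :: "'n set"
    and compl :: "'b \<Rightarrow> 'n set \<Rightarrow> 'n set"
  assumes "standing_setup alg gradR act rmul gradN M"
    and "graded_complementation alg rmul gradN compl"
    and "macaulay_basis rmul gradN M X"
  shows "(\<forall>m. \<exists>!m'. (red_step alg gradR rmul gradN compl X)\<^sup>*\<^sup>* m m' \<and>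
                   reduced alg gradR rmul gradN compl X m') \<and>
         (\<forall>m m'. (red_step alg gradR rmul gradN compl X)\<^sup>*\<^sup>* m m' \<and>
                   reduced alg gradR rmul gradN compl X m' \<longrightarrow>
              (\<forall>b. gcomp gradN m' b \<in> compl_diff compl b (gradN b) (Wspace alg gradR rmul gradN X b)))"
proof -
  interpret macaulay_reduction alg gradR act rmul gradN M X compl
    using assms by unfold_locales
  show ?thesis
    using reduct_exists reduct_unique reduced_components by blast
qed

end
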